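(* Let $d\in\mathbb N$, let $T\subset\mathbb R^d$ be a compact interval and $\mu$ a finite Borel measure on $T$, and let $q\ge1$. Let $U^X=(U^X_t)_{t\in T}$ and $U^Y=(U^Y_t)_{t\in T}$ be copula processes on a common probability space, and let $(F_{\tilde X_t})_{t\in T}$, $(F_{\tilde Y_t})_{t\in T}$ be families of one-dimensional distribution functions with finite $q$-th moments. Define $\tilde X_t:=F_{\tilde X_t}^{[-1]}(U^X_t)$ and $\tilde Y_t:=F_{\tilde Y_t}^{[-1]}(U^Y_t)$. Assume each $F_{\tilde Y_t}$ is absolutely continuous and strictly increasing, with density $f_{\tilde Y_t}$ satisfying $\|f_{\tilde Y}\|_\infty:=\sup_{t\in T,x\in\mathbb R}|f_{\tilde Y_t}(x)|<\infty$. Then $$\|U^X-U^Y\|_{L^q(T\times\Omega)}\le\|f_{\tilde Y}\|_\infty\Big(\|\tilde X-\tilde Y\|_{L^q(T\times\Omega)}+\big\|\mathbb W_q^q(F_{\tilde X_\cdot},F_{\tilde Y_\cdot})\big\|_{L^1(T)}^{1/q}\Big),$$ and in particular $$\|U^X-U^Y\|_{L^q(T\times\Omega)}\le2\|f_{\tilde Y}\|_\infty\|\tilde X-\tilde Y\|_{L^q(T\times\Omega)}.$$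
   Context: A copula process is a process each of whose coordinates is uniformly distributed on $[0,1]$. For a distribution function $F$, $F^{[-1]}(u):=\inf\{x\in\mathbb R:F(x)\ge u\}$. $L^q(T\times\Omega)$ is taken with respect to $\mu\otimes\mathbb P$ and $L^1(T)$ with respect to $\mu$. $\mathbb W_q^q(F_{\tilde X_t},F_{\tilde Y_t})=\int_0^1|F_{\tilde X_t}^{[-1]}(u)-F_{\tilde Y_t}^{[-1]}(u)|^qdu$ is the $q$-th power of the $q$-Wasserstein distance of the one-dimensional laws. *)

theory Defs
  imports "HOL-Probability.Probability"
begin

definition gen_inv :: "(real \<Rightarrow> real) \<Rightarrow> real \<Rightarrow> real" where
  "gen_inv F u = Inf {x. u \<le> F x}"

text \<open>Real power on [0,\<infinity>], with \<infinity> powr p = \<infinity> (used for p > 0).\<close>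
definition enn_powr :: "ennreal \<Rightarrow> real \<Rightarrow> ennreal" where
  "enn_powr x p = (if x = \<infinity> then \<infinity> else ennreal (enn2real x powr p))"

definition Lq_norm :: "'a measure \<Rightarrow> real \<Rightarrow> ('a \<Rightarrow> real) \<Rightarrow> ennreal" where
  "Lq_norm M q f = enn_powr (\<integral>\<^sup>+ z. ennreal (\<bar>f z\<bar> powr q) \<partial>M) (1 / q)"

definition distfun_moment :: "real \<Rightarrow> (real \<Rightarrow> real) \<Rightarrow> bool" where
  "distfun_moment q F \<longleftrightarrow> (\<exists>M. real_distribution M \<and> F = cdf M \<and>
      (\<integral>\<^sup>+ x. ennreal (\<bar>x\<bar> powr q) \<partial>M) < \<infinity>)"

text \<open>q-th power of the q-Wasserstein distance of two 1-d laws via quantiles.\<close>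
definition Wq_pow :: "real \<Rightarrow> (real \<Rightarrow> real) \<Rightarrow> (real \<Rightarrow> real) \<Rightarrow> ennreal" where
  "Wq_pow q F G = (\<integral>\<^sup>+ u \<in> {0<..<1}. ennreal (\<bar>gen_inv F u - gen_inv G u\<bar> powr q) \<partial>lborel)"

definition copula_process :: "'w measure \<Rightarrow> 't set \<Rightarrow> ('t \<Rightarrow> 'w \<Rightarrow> real) \<Rightarrow> bool" where
  "copula_process P T U \<longleftrightarrow> (\<forall>t\<in>T. U t \<in> borel_measurable P \<and>
      distr P borel (U t) = uniform_measure lborel {0..1})"

end

theory Submission
  imports Defs
begin

text \<open>
  Fix \<open>t\<close>, write \<open>F\<close>, \<open>G\<close> for the distribution functions of \<open>X\<^sub>t\<close>, \<open>Y\<^sub>t\<close> and \<open>u\<close>, \<open>u'\<close> for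
  the uniform variables \<open>U\<^sup>X\<^sub>t\<close>, \<open>U\<^sup>Y\<^sub>t\<close>. A density bounded by \<open>K\<close> makes \<open>G\<close> continuous and
  \<open>K\<close>-Lipschitz, and continuity gives \<open>G (G\<^sup>-\<^sup>1 v) = v\<close>. Hence \<open>u = G (G\<^sup>-\<^sup>1 u)\<close> and
  \<open>u' = G Y\<^sub>t\<close>, so \<open>|u - u'| \<le> K |X\<^sub>t - Y\<^sub>t| + K |F\<^sup>-\<^sup>1 u - G\<^sup>-\<^sup>1 u|\<close>, and the last term has
  \<open>L\<^sup>q\<close>-norm \<open>W\<^sub>q(F, G)\<close> because \<open>u\<close> is uniform.

  For the second bound, \<open>|u - u'| \<le> |u - G X\<^sub>t| + |G X\<^sub>t - u'|\<close>. The variables \<open>u\<close> and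
  \<open>G X\<^sub>t = G (F\<^sup>-\<^sup>1 u)\<close> are comonotone and \<open>u'\<close> has the law of \<open>u\<close>. Among couplings with
  given marginals the comonotone one minimises \<open>E|A - B|\<^sup>q\<close>, so
  \<open>E|u - G X\<^sub>t|\<^sup>q \<le> E|u' - G X\<^sub>t|\<^sup>q \<le> K\<^sup>q E|X\<^sub>t - Y\<^sub>t|\<^sup>q\<close>. This rearrangement inequality follows
  from \<open>E (X - Y - s)\<^sub>+ = \<integral> P(Y + s < r < X) dr\<close> and, for \<open>q > 1\<close>, from
  \<open>(z\<^sub>+)\<^sup>q = \<integral>\<^sub>0\<^sup>\<infinity> q(q-1) s\<^sup>q\<^sup>-\<^sup>2 (z - s)\<^sub>+ ds\<close>.

  The mixed term \<open>F\<^sup>-\<^sup>1 (U\<^sup>X\<^sub>t) - G\<^sup>-\<^sup>1 (U\<^sup>X\<^sub>t)\<close> need not be jointly measurable in \<open>(t, \<omega>)\<close>, so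
  Minkowski's inequality on \<open>T \<times> \<Omega>\<close> is replaced by the convexity bound
  \<open>(x + y)\<^sup>q \<le> l\<^sup>1\<^sup>-\<^sup>q x\<^sup>q + (1 - l)\<^sup>1\<^sup>-\<^sup>q y\<^sup>q\<close>. It is applied for each \<open>t\<close>, and \<open>l\<close> is optimised
  only after integrating over \<open>T\<close>.
\<close>

definition comonotone_on :: "'a set \<Rightarrow> ('a \<Rightarrow> real) \<Rightarrow> ('a \<Rightarrow> real) \<Rightarrow> bool" where
  "comonotone_on S X Y \<longleftrightarrow> (\<forall>\<omega>\<in>S. \<forall>\<omega>'\<in>S. 0 \<le> (X \<omega> - X \<omega>') * (Y \<omega> - Y \<omega>'))"

lemma comonotone_on_commute: "comonotone_on S X Y \<longleftrightarrow> comonotone_on S Y X"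
  by (simp add: comonotone_on_def mult.commute)

lemma comonotone_onD:
  assumes "comonotone_on S X Y" "\<omega> \<in> S" "\<omega>' \<in> S" "Y \<omega> < Y \<omega>'"
  shows "X \<omega> \<le> X \<omega>'"
  using assms unfolding comonotone_on_def by (fastforce simp: zero_le_mult_iff)

lemma comonotone_on_mono_on_comp:
  assumes "mono_on I h" "u ` S \<subseteq> I"
  shows "comonotone_on S u (\<lambda>\<omega>. h (u \<omega>))"
  unfolding comonotone_on_def
proof safe
  fix \<omega> \<omega>' assume "\<omega> \<in> S" "\<omega>' \<in> S"
  then have "u \<omega> \<le> u \<omega>' \<Longrightarrow> h (u \<omega>) \<le> h (u \<omega>')" "u \<omega>' \<le> u \<omega> \<Longrightarrow> h (u \<omega>') \<le> h (u \<omega>)"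
    using assms by (auto intro: mono_onD)
  then show "0 \<le> (u \<omega> - u \<omega>') * (h (u \<omega>) - h (u \<omega>'))"
    by (cases "u \<omega> \<le> u \<omega>'") (auto intro: mult_nonpos_nonpos)
qed

lemma ennreal_diff_eq_nn_integral_indicator:
  "ennreal (x - y) = (\<integral>\<^sup>+ r. indicator {y <..< x} r \<partial>lborel)"
  by (cases "y \<le> x") (auto simp: ennreal_eq_0_iff)

lemma nn_integral_diff_eq_emeasure:
  assumes "sigma_finite_measure M"
    and [measurable]: "f \<in> borel_measurable M" "g \<in> borel_measurable M"
  shows "(\<integral>\<^sup>+ \<omega>. ennreal (f \<omega> - g \<omega>) \<partial>M) =
         (\<integral>\<^sup>+ r. emeasure M {\<omega>\<in>space M. g \<omega> < r \<and> r < f \<omega>} \<partial>lborel)"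
proof -
  interpret pair_sigma_finite M lborel
    by (simp add: assms(1) lborel.sigma_finite_measure_axioms pair_sigma_finite.intro)
  have [measurable]: "(\<lambda>(\<omega>, r). indicator {g \<omega> <..< f \<omega>} r :: ennreal) \<in> borel_measurable (M \<Otimes>\<^sub>M lborel)"
  proof -
    have "(\<lambda>(\<omega>, r). indicator {g \<omega> <..< f \<omega>} r :: ennreal) =
          (\<lambda>p. if g (fst p) < snd p \<and> snd p < f (fst p) then 1 else 0)"
      by (auto simp: indicator_def fun_eq_iff)
    then show ?thesis by simp
  qed
  have "(\<integral>\<^sup>+ \<omega>. ennreal (f \<omega> - g \<omega>) \<partial>M) =
        (\<integral>\<^sup>+ \<omega>. (\<integral>\<^sup>+ r. indicator {g \<omega> <..< f \<omega>} r \<partial>lborel) \<partial>M)"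
    by (simp add: ennreal_diff_eq_nn_integral_indicator)
  also have "\<dots> = (\<integral>\<^sup>+ r. (\<integral>\<^sup>+ \<omega>. indicator {g \<omega> <..< f \<omega>} r \<partial>M) \<partial>lborel)"
    by (rule Fubini'[symmetric]) measurable
  also have "\<dots> = (\<integral>\<^sup>+ r. (\<integral>\<^sup>+ \<omega>. indicator {\<omega>\<in>space M. g \<omega> < r \<and> r < f \<omega>} \<omega> \<partial>M) \<partial>lborel)"
    by (intro nn_integral_cong) (auto simp: indicator_def)
  also have "\<dots> = (\<integral>\<^sup>+ r. emeasure M {\<omega>\<in>space M. g \<omega> < r \<and> r < f \<omega>} \<partial>lborel)"
    by (intro nn_integral_cong nn_integral_indicator) measurable
  finally show ?thesis .
qed

lemma emeasure_Diff_eq_if_nested_AE: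
  assumes "finite_measure M" "A \<in> sets M" "B \<in> sets M"
    and "(AE x in M. x \<in> B \<longrightarrow> x \<in> A) \<or> (AE x in M. x \<in> A \<longrightarrow> x \<in> B)"
  shows "emeasure M (A - B) = emeasure M A - emeasure M B"
  using assms(4)
proof
  assume "AE x in M. x \<in> B \<longrightarrow> x \<in> A"
  then have "emeasure M (A \<inter> B) = emeasure M B"
    using assms(2,3) by (intro emeasure_eq_AE) auto
  moreover have "A - B = A - (A \<inter> B)" by blast
  ultimately show ?thesis
    using assms(1-3) by (simp add: emeasure_Diff finite_measure.emeasure_finite)
next
  assume AB: "AE x in M. x \<in> A \<longrightarrow> x \<in> B"
  then have "emeasure M (A - B) = 0"
    using assms(2,3) by (subst AE_iff_measurable[symmetric]) (auto elim: eventually_mono dest: sets.sets_into_space)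
  moreover have "emeasure M A \<le> emeasure M B"
    using AB assms(2,3) by (intro emeasure_mono_AE) auto
  ultimately show ?thesis
    using finite_measure.emeasure_finite[OF assms(1)] by (simp add: diff_eq_0_iff_ennreal less_top)
qed

lemma emeasure_eq_if_distr_eq:
  assumes "distr M borel X = distr M borel Y" "X \<in> borel_measurable M" "Y \<in> borel_measurable M"
    and "I \<in> sets borel"
  shows "emeasure M {\<omega>\<in>space M. X \<omega> \<in> I} = emeasure M {\<omega>\<in>space M. Y \<omega> \<in> I}"
  using arg_cong[OF assms(1), of "\<lambda>N. emeasure N I"] assms(2-4)
  by (simp add: emeasure_distr vimage_def Int_def conj_commute)

lemma comonotone_on_level_sets_nested_AE:
  assumes S: "AE \<omega> in M. \<omega> \<in> S" and XY: "comonotone_on S X Y"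
  shows "(AE \<omega> in M. c \<le> Y \<omega> \<longrightarrow> r < X \<omega>) \<or> (AE \<omega> in M. r < X \<omega> \<longrightarrow> c \<le> Y \<omega>)"
proof (cases "\<exists>\<omega>\<^sub>0\<in>S. r < X \<omega>\<^sub>0 \<and> Y \<omega>\<^sub>0 < c")
  case True
  then obtain \<omega>\<^sub>0 where "\<omega>\<^sub>0 \<in> S" "r < X \<omega>\<^sub>0" "Y \<omega>\<^sub>0 < c" by blast
  then have "r < X \<omega>" if "\<omega> \<in> S" "c \<le> Y \<omega>" for \<omega>
    using comonotone_onD[OF XY \<open>\<omega>\<^sub>0 \<in> S\<close> that(1)] that(2) by force
  then show ?thesis
    using S by (auto elim: eventually_mono)
next
  case False
  have "AE \<omega> in M. r < X \<omega> \<longrightarrow> c \<le> Y \<omega>"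
    using S by (rule eventually_mono) (use False in \<open>auto simp: not_less\<close>)
  then show ?thesis ..
qed

text \<open>For a comonotone pair the sets \<open>{r < X}\<close> and \<open>{r - s \<le> Y}\<close> are nested up to a null set,
  so the measure of the strip \<open>{Y + s < r < X}\<close> is determined by the marginals; any other
  coupling can only enlarge it.\<close>

lemma comonotone_emeasure_strip_le:
  assumes M: "finite_measure M"
    and [measurable]: "X \<in> borel_measurable M" "Y \<in> borel_measurable M"
      "A \<in> borel_measurable M" "B \<in> borel_measurable M"
    and AX: "distr M borel A = distr M borel X" and BY: "distr M borel B = distr M borel Y"
    and "AE \<omega> in M. \<omega> \<in> S" "comonotone_on S X Y"
  shows "emeasure M {\<omega>\<in>space M. Y \<omega> + s < r \<and> r < X \<omega>} \<le> emeasure M {\<omega>\<in>space M. B \<omega> + s < r \<and> r < A \<omega>}"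
proof -
  interpret finite_measure M by fact
  have "{\<omega>\<in>space M. Y \<omega> + s < r \<and> r < X \<omega>} = {\<omega>\<in>space M. r < X \<omega>} - {\<omega>\<in>space M. r - s \<le> Y \<omega>}"
    by auto
  also have "emeasure M \<dots> = emeasure M {\<omega>\<in>space M. r < X \<omega>} - emeasure M {\<omega>\<in>space M. r - s \<le> Y \<omega>}"
    using comonotone_on_level_sets_nested_AE[OF assms(8,9), of "r - s" r]
    by (intro emeasure_Diff_eq_if_nested_AE M) auto
  also have "\<dots> = emeasure M {\<omega>\<in>space M. r < A \<omega>} - emeasure M {\<omega>\<in>space M. r - s \<le> B \<omega>}"
    using emeasure_eq_if_distr_eq[OF AX, of "{r<..}"] emeasure_eq_if_distr_eq[OF BY, of "{r-s..}"] by simp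
  also have "\<dots> \<le> emeasure M {\<omega>\<in>space M. B \<omega> + s < r \<and> r < A \<omega>}"
  proof -
    have "emeasure M {\<omega>\<in>space M. r < A \<omega>} \<le>
          emeasure M ({\<omega>\<in>space M. B \<omega> + s < r \<and> r < A \<omega>} \<union> {\<omega>\<in>space M. r - s \<le> B \<omega>})"
      by (rule emeasure_mono) auto
    also have "\<dots> \<le> emeasure M {\<omega>\<in>space M. B \<omega> + s < r \<and> r < A \<omega>} + emeasure M {\<omega>\<in>space M. r - s \<le> B \<omega>}"
      by (rule emeasure_subadditive) measurable
    finally show ?thesis by (simp add: ennreal_minus_le_iff add.commute)
  qed
  finally show ?thesis .
qed

lemma comonotone_nn_integral_diff_le:
  assumes "finite_measure M"
    and [measurable]: "X \<in> borel_measurable M" "Y \<in> borel_measurable M"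
      "A \<in> borel_measurable M" "B \<in> borel_measurable M"
    and "distr M borel A = distr M borel X" "distr M borel B = distr M borel Y"
    and "AE \<omega> in M. \<omega> \<in> S" "comonotone_on S X Y"
  shows "(\<integral>\<^sup>+ \<omega>. ennreal (X \<omega> - Y \<omega> - s) \<partial>M) \<le> (\<integral>\<^sup>+ \<omega>. ennreal (A \<omega> - B \<omega> - s) \<partial>M)"
proof -
  have layer: "(\<integral>\<^sup>+ \<omega>. ennreal (Z \<omega> - W \<omega> - s) \<partial>M) =
      (\<integral>\<^sup>+ r. emeasure M {\<omega>\<in>space M. W \<omega> + s < r \<and> r < Z \<omega>} \<partial>lborel)"
    if [measurable]: "Z \<in> borel_measurable M" "W \<in> borel_measurable M" for Z W
    using nn_integral_diff_eq_emeasure[of M Z "\<lambda>\<omega>. W \<omega> + s"] assms(1)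
    by (simp add: diff_diff_eq finite_measure.sigma_finite_measure)
  show ?thesis
    using comonotone_emeasure_strip_le[OF assms] by (simp add: layer nn_integral_mono)
qed

lemma has_integral_powr_kernel:
  fixes q z :: real
  assumes q: "q > 1" and z: "z \<ge> 0"
  shows "((\<lambda>s. q * (q - 1) * s powr (q - 2) * (z - s)) has_integral z powr q) {0..z}"
proof -
  have "((\<lambda>s. (q * (q - 1) * z) * s powr (q - 2) - (q * (q - 1)) * s powr (q - 1)) has_integral
      (q * (q - 1) * z) * (z powr (q - 2 + 1) / (q - 2 + 1)) -
      (q * (q - 1)) * (z powr (q - 1 + 1) / (q - 1 + 1))) {0..z}"
    using q z by (intro has_integral_diff has_integral_mult_right has_integral_powr_from_0) auto
  moreover have "(q * (q - 1) * z) * (z powr (q - 2 + 1) / (q - 2 + 1)) -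
      (q * (q - 1)) * (z powr (q - 1 + 1) / (q - 1 + 1)) = z powr q"
    using q powr_mult_base[OF z, of "q - 1"] by (simp add: field_simps)
  moreover have "q * (q - 1) * s powr (q - 2) * (z - s) =
      (q * (q - 1) * z) * s powr (q - 2) - (q * (q - 1)) * s powr (q - 1)"
    if "s \<in> {0..z}" for s
    using powr_mult_base[of s "q - 2"] that by (simp add: algebra_simps)
  ultimately show ?thesis
    by (auto intro: has_integral_eq[rotated])
qed

lemma pos_part_powr_eq_nn_integral:
  fixes q z :: real
  assumes q: "q > 1"
  shows "ennreal ((max z 0) powr q) =
    (\<integral>\<^sup>+ s. ennreal (q * (q - 1) * s powr (q - 2)) * indicator {0<..} s * ennreal (z - s) \<partial>lborel)"
proof (cases "z \<le> 0")
  case True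
  then have "(\<integral>\<^sup>+ s. ennreal (q * (q - 1) * s powr (q - 2)) * indicator {0<..} s * ennreal (z - s) \<partial>lborel) = 0"
    by (intro nn_integral_zero') (auto simp: indicator_def ennreal_eq_0_iff)
  then show ?thesis using True q by simp
next
  case False
  have "(\<integral>\<^sup>+ s. ennreal (q * (q - 1) * s powr (q - 2)) * indicator {0<..} s * ennreal (z - s) \<partial>lborel)
      = (\<integral>\<^sup>+ s. ennreal (q * (q - 1) * s powr (q - 2) * (z - s)) * indicator {0..z} s \<partial>lborel)"
  proof (rule nn_integral_cong)
    fix s :: real
    consider "s \<le> 0" | "0 < s" "s \<le> z" | "z < s" by linarith
    then show "ennreal (q * (q - 1) * s powr (q - 2)) * indicator {0<..} s * ennreal (z - s) =
          ennreal (q * (q - 1) * s powr (q - 2) * (z - s)) * indicator {0..z} s"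
      by cases (use q False in \<open>auto simp: ennreal_mult[symmetric] indicator_def ennreal_eq_0_iff\<close>)
  qed
  also have "\<dots> = ennreal (z powr q)"
    using q False
    by (intro nn_integral_has_integral_lebesgue' has_integral_powr_kernel) (auto intro!: mult_nonneg_nonneg)
  finally show ?thesis using False by simp
qed

lemma nn_integral_pos_part_powr_eq:
  assumes "sigma_finite_measure M" and q: "q > 1"
    and [measurable]: "f \<in> borel_measurable M" "g \<in> borel_measurable M"
  shows "(\<integral>\<^sup>+ \<omega>. ennreal ((max (f \<omega> - g \<omega>) 0) powr q) \<partial>M) =
    (\<integral>\<^sup>+ s. ennreal (q * (q - 1) * s powr (q - 2)) * indicator {0<..} s *
      (\<integral>\<^sup>+ \<omega>. ennreal (f \<omega> - g \<omega> - s) \<partial>M) \<partial>lborel)"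
proof -
  interpret pair_sigma_finite M lborel
    by (simp add: assms(1) lborel.sigma_finite_measure_axioms pair_sigma_finite.intro)
  have "(\<integral>\<^sup>+ \<omega>. ennreal ((max (f \<omega> - g \<omega>) 0) powr q) \<partial>M) =
     (\<integral>\<^sup>+ \<omega>. (\<integral>\<^sup>+ s. ennreal (q * (q - 1) * s powr (q - 2)) * indicator {0<..} s * ennreal (f \<omega> - g \<omega> - s) \<partial>lborel) \<partial>M)"
    using pos_part_powr_eq_nn_integral[OF q] by simp
  also have "\<dots> = (\<integral>\<^sup>+ s. (\<integral>\<^sup>+ \<omega>. ennreal (q * (q - 1) * s powr (q - 2)) * indicator {0<..} s * ennreal (f \<omega> - g \<omega> - s) \<partial>M) \<partial>lborel)"
    by (rule Fubini'[symmetric]) measurable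
  also have "\<dots> = (\<integral>\<^sup>+ s. ennreal (q * (q - 1) * s powr (q - 2)) * indicator {0<..} s * (\<integral>\<^sup>+ \<omega>. ennreal (f \<omega> - g \<omega> - s) \<partial>M) \<partial>lborel)"
    by (simp add: nn_integral_cmult)
  finally show ?thesis .
qed

lemma comonotone_nn_integral_pos_part_powr_le:
  assumes M: "finite_measure M" and q: "q \<ge> 1"
    and meas: "X \<in> borel_measurable M" "Y \<in> borel_measurable M"
      "A \<in> borel_measurable M" "B \<in> borel_measurable M"
    and "distr M borel A = distr M borel X" "distr M borel B = distr M borel Y"
    and "AE \<omega> in M. \<omega> \<in> S" "comonotone_on S X Y"
  shows "(\<integral>\<^sup>+ \<omega>. ennreal ((max (X \<omega> - Y \<omega>) 0) powr q) \<partial>M) \<le>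
         (\<integral>\<^sup>+ \<omega>. ennreal ((max (A \<omega> - B \<omega>) 0) powr q) \<partial>M)"
proof (cases "q = 1")
  case True
  have "ennreal ((max z 0) powr 1) = ennreal (z - 0)" for z :: real
    by (cases "z \<le> 0") (auto simp: ennreal_eq_0_iff)
  then show ?thesis
    using True comonotone_nn_integral_diff_le[OF assms(1,3-), of 0] by simp
next
  case False
  with q have "q > 1" by simp
  have M': "sigma_finite_measure M"
    using M by (simp add: finite_measure.sigma_finite_measure)
  show ?thesis
    unfolding nn_integral_pos_part_powr_eq[OF M' \<open>q > 1\<close> meas(1,2)] nn_integral_pos_part_powr_eq[OF M' \<open>q > 1\<close> meas(3,4)]
    by (intro nn_integral_mono mult_left_mono comonotone_nn_integral_diff_le[OF assms(1,3-)]) auto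
qed

lemma comonotone_nn_integral_abs_powr_le:
  assumes "finite_measure M" and q: "q \<ge> 1"
    and [measurable]: "X \<in> borel_measurable M" "Y \<in> borel_measurable M"
      "A \<in> borel_measurable M" "B \<in> borel_measurable M"
    and "distr M borel A = distr M borel X" "distr M borel B = distr M borel Y"
    and "AE \<omega> in M. \<omega> \<in> S" and XY: "comonotone_on S X Y"
  shows "(\<integral>\<^sup>+ \<omega>. ennreal (\<bar>X \<omega> - Y \<omega>\<bar> powr q) \<partial>M) \<le> (\<integral>\<^sup>+ \<omega>. ennreal (\<bar>A \<omega> - B \<omega>\<bar> powr q) \<partial>M)"
proof -
  have split: "ennreal (\<bar>z\<bar> powr q) = ennreal ((max z 0) powr q) + ennreal ((max (- z) 0) powr q)" for z :: real
    using q by (cases "z \<le> 0") auto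
  have "(\<integral>\<^sup>+ \<omega>. ennreal (\<bar>X \<omega> - Y \<omega>\<bar> powr q) \<partial>M) =
     (\<integral>\<^sup>+ \<omega>. ennreal ((max (X \<omega> - Y \<omega>) 0) powr q) \<partial>M) + (\<integral>\<^sup>+ \<omega>. ennreal ((max (Y \<omega> - X \<omega>) 0) powr q) \<partial>M)"
    unfolding split by (subst nn_integral_add[symmetric]) auto
  also have "\<dots> \<le> (\<integral>\<^sup>+ \<omega>. ennreal ((max (A \<omega> - B \<omega>) 0) powr q) \<partial>M) + (\<integral>\<^sup>+ \<omega>. ennreal ((max (B \<omega> - A \<omega>) 0) powr q) \<partial>M)"
    using XY unfolding comonotone_on_commute[of S X]
    by (intro add_mono comonotone_nn_integral_pos_part_powr_le) (use assms in auto)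
  also have "\<dots> = (\<integral>\<^sup>+ \<omega>. ennreal (\<bar>A \<omega> - B \<omega>\<bar> powr q) \<partial>M)"
    unfolding split by (subst nn_integral_add[symmetric]) auto
  finally show ?thesis .
qed

lemma (in real_distribution) cdf_ge_set_nonempty_bdd_below:
  assumes "0 < u" "u < 1"
  shows "{x. u \<le> cdf M x} \<noteq> {}" "bdd_below {x. u \<le> cdf M x}"
proof -
  obtain x where "cdf M x > u"
    using order_tendstoD(1)[OF cdf_lim_at_top_prob \<open>u < 1\<close>] by (auto simp: eventually_at_top_linorder)
  then show "{x. u \<le> cdf M x} \<noteq> {}" by (auto intro: less_imp_le)
  obtain x\<^sub>0 where x\<^sub>0: "\<And>x. x \<le> x\<^sub>0 \<Longrightarrow> cdf M x < u"
    using order_tendstoD(2)[OF cdf_lim_at_bot \<open>0 < u\<close>] by (auto simp: eventually_at_bot_linorder)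
  have "x\<^sub>0 \<le> x" if "u \<le> cdf M x" for x
    using x\<^sub>0[of x] that by (cases "x \<le> x\<^sub>0") auto
  then show "bdd_below {x. u \<le> cdf M x}"
    by (intro bdd_belowI[of _ x\<^sub>0]) auto
qed

lemma (in real_distribution) gen_inv_cdf_mono:
  assumes "0 < u" "u \<le> v" "v < 1"
  shows "gen_inv (cdf M) u \<le> gen_inv (cdf M) v"
  unfolding gen_inv_def
  using assms cdf_ge_set_nonempty_bdd_below[of u] cdf_ge_set_nonempty_bdd_below[of v] by (intro cInf_superset_mono) auto

lemma (in real_distribution) borel_measurable_gen_inv_cdf:
  "gen_inv (cdf M) \<in> borel_measurable borel"
proof (rule borel_measurable_piecewise_mono[of "{{..0}, {0<..<1}, {1<..}, {1}}"])
  have "gen_inv (cdf M) u = Inf UNIV" if "u \<le> 0" for u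
    using that cdf_nonneg[of _] unfolding gen_inv_def by (metis (mono_tags) UNIV_eq_I mem_Collect_eq order_trans)
  moreover have "gen_inv (cdf M) u = Inf {}" if "u > 1" for u
    using that cdf_bounded_prob[of _] unfolding gen_inv_def by (metis (mono_tags) empty_Collect_eq not_le order_less_le_trans)
  ultimately show "mono_on c (gen_inv (cdf M))" if "c \<in> {{..0}, {0<..<1}, {1<..}, {1}}" for c
    using that by (auto simp: mono_on_def intro: gen_inv_cdf_mono)
qed auto

lemma (in real_distribution) cdf_gen_inv_cdf:
  assumes cont: "continuous_on UNIV (cdf M)" and u: "0 < u" "u < 1"
  shows "cdf M (gen_inv (cdf M) u) = u"
proof -
  obtain x\<^sub>1 x\<^sub>2 where x\<^sub>1: "cdf M x\<^sub>1 < u" and x\<^sub>2: "u < cdf M x\<^sub>2"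
    using order_tendstoD(2)[OF cdf_lim_at_bot \<open>0 < u\<close>] order_tendstoD(1)[OF cdf_lim_at_top_prob \<open>u < 1\<close>]
    by (auto simp: eventually_at_bot_linorder eventually_at_top_linorder)
  have "x\<^sub>1 \<le> x\<^sub>2"
    using x\<^sub>1 x\<^sub>2 cdf_nondecreasing[of x\<^sub>2 x\<^sub>1] by (cases "x\<^sub>1 \<le> x\<^sub>2") auto
  then obtain x\<^sub>0 where x\<^sub>0: "cdf M x\<^sub>0 = u"
    using IVT'[of "cdf M" x\<^sub>1 u x\<^sub>2] x\<^sub>1 x\<^sub>2 continuous_on_subset[OF cont] by fastforce
  have "closed {x. u \<le> cdf M x}"
    using cont by (intro closed_Collect_le continuous_on_const)
  then have "gen_inv (cdf M) u \<in> {x. u \<le> cdf M x}"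
    unfolding gen_inv_def using cdf_ge_set_nonempty_bdd_below[OF u] by (intro closed_contains_Inf)
  moreover have "gen_inv (cdf M) u \<le> x\<^sub>0"
    unfolding gen_inv_def using x\<^sub>0 cdf_ge_set_nonempty_bdd_below[OF u] by (intro cInf_lower) auto
  ultimately show ?thesis
    using cdf_nondecreasing x\<^sub>0 by (auto intro: antisym)
qed

lemma (in real_distribution) set_integrable_cdf_density:
  assumes cdf_eq: "\<And>x. cdf M x = (\<integral>y\<in>{..x}. g y \<partial>lborel)"
  shows "set_integrable lborel {..x} g"
proof (rule ccontr)
  assume nonint: "\<not> set_integrable lborel {..x} g"
  obtain N where "\<forall>n\<ge>N. 0 < cdf M n"
    using order_tendstoD(1)[OF cdf_lim_at_top_prob, of 0] by (auto simp: eventually_at_top_linorder)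
  then obtain y where "y \<ge> x" "cdf M y > 0"
    by (meson max.cobounded1 max.cobounded2)
  moreover have "\<not> set_integrable lborel {..y} g"
    using nonint \<open>y \<ge> x\<close> set_integrable_subset[of lborel "{..y}" g "{..x}"] by auto
  ultimately show False
    using cdf_eq[of y] by (simp add: set_lebesgue_integral_def set_integrable_def not_integrable_integral_eq)
qed

lemma lipschitz_on_integral_of_bounded_density:
  fixes g G :: "real \<Rightarrow> real"
  assumes g: "\<And>x. 0 \<le> g x" "\<And>x. g x \<le> K" "\<And>x. set_integrable lborel {..x} g"
    and G: "\<And>x. G x = (\<integral>y\<in>{..x}. g y \<partial>lborel)"
  shows "K-lipschitz_on UNIV G"
proof -
  have incr: "0 \<le> G y - G x \<and> G y - G x \<le> K * (y - x)" if "x \<le> y" for x y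
  proof -
    have int_Ioc: "set_integrable lborel {x<..y} g"
      by (rule set_integrable_subset[OF g(3)[of y]]) auto
    have "G y = (\<integral>z\<in>{..x} \<union> {x<..y}. g z \<partial>lborel)"
      unfolding G using that by (intro arg_cong[where f="\<lambda>A. set_lebesgue_integral lborel A g"]) auto
    also have "\<dots> = G x + (\<integral>z\<in>{x<..y}. g z \<partial>lborel)"
      unfolding G by (rule set_integral_Un) (auto intro: g(3) int_Ioc)
    finally have "G y - G x = (\<integral>z\<in>{x<..y}. g z \<partial>lborel)" by simp
    moreover have "(\<integral>z\<in>{x<..y}. g z \<partial>lborel) \<le> (\<integral>z\<in>{x<..y}. K \<partial>lborel)"
      using that by (intro set_integral_mono int_Ioc g(2)) (auto simp: set_integrable_def)
    moreover have "(\<integral>z\<in>{x<..y}. K \<partial>lborel) = K * (y - x)"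
      using that by (subst set_integral_const) auto
    moreover have "0 \<le> (\<integral>z\<in>{x<..y}. g z \<partial>lborel)"
      unfolding set_lebesgue_integral_def by (intro Bochner_Integration.integral_nonneg) (simp add: g(1))
    ultimately show ?thesis
      using that by simp
  qed
  show ?thesis
  proof (rule lipschitz_onI)
    show "dist (G x) (G y) \<le> K * dist x y" for x y
      using incr[of x y] incr[of y x] by (cases "x \<le> y") (auto simp: dist_real_def)
    show "0 \<le> K" using g(1,2) order.trans by blast
  qed
qed

lemma AE_uniform_unit_Ioo:
  fixes u :: "'a \<Rightarrow> real"
  assumes "u \<in> borel_measurable M" "distr M borel u = uniform_measure lborel {0..1}"
  shows "AE \<omega> in M. 0 < u \<omega> \<and> u \<omega> < 1"
proof -
  have "AE v in uniform_measure lborel {0..1::real}. 0 < v \<and> v < 1"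
    using AE_lborel_singleton[of "0::real"] AE_lborel_singleton[of "1::real"]
    by (intro AE_uniform_measureI) (auto elim!: eventually_elim2)
  then have "AE v in distr M borel u. 0 < v \<and> v < 1"
    unfolding assms(2) .
  then show ?thesis
    using assms(1) by (subst (asm) AE_distr_iff) auto
qed

lemma nn_integral_uniform_unit:
  fixes u :: "'a \<Rightarrow> real"
  assumes [measurable]: "u \<in> borel_measurable M" "h \<in> borel_measurable borel"
    and u: "distr M borel u = uniform_measure lborel {0..1}"
  shows "(\<integral>\<^sup>+ \<omega>. h (u \<omega>) \<partial>M) = (\<integral>\<^sup>+ v \<in> {0<..<1}. h v \<partial>lborel)"
proof -
  have "(\<integral>\<^sup>+ \<omega>. h (u \<omega>) \<partial>M) = (\<integral>\<^sup>+ v. h v \<partial>distr M borel u)"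
    by (rule nn_integral_distr[symmetric]) auto
  also have "\<dots> = (\<integral>\<^sup>+ v. h v \<partial>uniform_measure lborel {0..1})"
    unfolding u ..
  also have "\<dots> = (\<integral>\<^sup>+ v. h v * indicator {0..1} v \<partial>lborel)"
    by (subst nn_integral_uniform_measure) (auto simp: divide_ennreal_def)
  also have "\<dots> = (\<integral>\<^sup>+ v \<in> {0<..<1}. h v \<partial>lborel)"
    using AE_lborel_singleton[of "0::real"] AE_lborel_singleton[of "1::real"]
    by (intro nn_integral_cong_AE) (auto simp: indicator_def elim!: eventually_elim2)
  finally show ?thesis .
qed

lemma powr_add_le_convex_split:
  fixes x y l q :: real
  assumes q: "q \<ge> 1" and x: "x \<ge> 0" and y: "y \<ge> 0" and l: "0 < l" "l < 1"
  shows "(x + y) powr q \<le> l powr (1 - q) * x powr q + (1 - l) powr (1 - q) * y powr q"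
proof -
  have one_le: "1 \<le> c powr (1 - q)" if "0 < c" "c \<le> 1" for c :: real
  proof -
    have "c powr (1 - q) = (1 / c) powr (q - 1)"
      using that by (simp add: powr_divide powr_minus_divide[symmetric] powr_minus)
    then show ?thesis
      using that q by (simp add: ge_one_powr_ge_zero)
  qed
  consider "x = 0" | "y = 0" | "x > 0" "y > 0" using x y by linarith
  then show ?thesis
  proof cases
    case 1
    then show ?thesis
      using one_le[of "1 - l"] l q mult_right_mono[of 1 "(1 - l) powr (1 - q)" "y powr q"] by simp
  next
    case 2
    then show ?thesis
      using one_le[of l] l q mult_right_mono[of 1 "l powr (1 - q)" "x powr q"] by simp
  next
    case 3
    have "(x + y) powr q = ((1 - (1 - l)) *\<^sub>R (x / l) + (1 - l) *\<^sub>R (y / (1 - l))) powr q"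
      using l by simp
    also have "\<dots> \<le> (1 - (1 - l)) * (x / l) powr q + (1 - l) * (y / (1 - l)) powr q"
      by (rule convex_onD[OF powr_convex[OF q]]) (use l 3 in auto)
    also have "\<dots> = l powr (1 - q) * x powr q + (1 - l) powr (1 - q) * y powr q"
      using l 3 by (simp add: powr_divide powr_diff)
    finally show ?thesis .
  qed
qed

lemma nn_integral_powr_le_convex_split:
  fixes f g h :: "'a \<Rightarrow> real"
  assumes q: "q \<ge> 1" and c: "c \<ge> 0" and l: "0 < l" "l < 1"
    and [measurable]: "f \<in> borel_measurable M" "g \<in> borel_measurable M"
    and h: "AE \<omega> in M. \<bar>h \<omega>\<bar> \<le> c * \<bar>f \<omega>\<bar> + c * \<bar>g \<omega>\<bar>"
  shows "(\<integral>\<^sup>+ \<omega>. ennreal (\<bar>h \<omega>\<bar> powr q) \<partial>M) \<le> ennreal (c powr q) *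
      (ennreal (l powr (1 - q)) * (\<integral>\<^sup>+ \<omega>. ennreal (\<bar>f \<omega>\<bar> powr q) \<partial>M) +
       ennreal ((1 - l) powr (1 - q)) * (\<integral>\<^sup>+ \<omega>. ennreal (\<bar>g \<omega>\<bar> powr q) \<partial>M))"
proof -
  have "(\<integral>\<^sup>+ \<omega>. ennreal (\<bar>h \<omega>\<bar> powr q) \<partial>M) \<le>
     (\<integral>\<^sup>+ \<omega>. ennreal (c powr q) * (ennreal (l powr (1 - q)) * ennreal (\<bar>f \<omega>\<bar> powr q) +
        ennreal ((1 - l) powr (1 - q)) * ennreal (\<bar>g \<omega>\<bar> powr q)) \<partial>M)"
    using h
  proof (intro nn_integral_mono_AE, eventually_elim)
    case (elim \<omega>)
    have "\<bar>h \<omega>\<bar> powr q \<le> (c * \<bar>f \<omega>\<bar> + c * \<bar>g \<omega>\<bar>) powr q"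
      using elim q by (intro powr_mono2) auto
    also have "\<dots> \<le> l powr (1 - q) * (c * \<bar>f \<omega>\<bar>) powr q + (1 - l) powr (1 - q) * (c * \<bar>g \<omega>\<bar>) powr q"
      using q c l by (intro powr_add_le_convex_split) auto
    also have "\<dots> = c powr q * (l powr (1 - q) * \<bar>f \<omega>\<bar> powr q + (1 - l) powr (1 - q) * \<bar>g \<omega>\<bar> powr q)"
      using c by (simp add: powr_mult algebra_simps)
    finally have "ennreal (\<bar>h \<omega>\<bar> powr q) \<le>
        ennreal (c powr q * (l powr (1 - q) * \<bar>f \<omega>\<bar> powr q + (1 - l) powr (1 - q) * \<bar>g \<omega>\<bar> powr q))"
      by (rule ennreal_leI)
    then show ?case
      by (simp only: ennreal_mult[symmetric] ennreal_plus[symmetric] powr_ge_zero mult_nonneg_nonneg add_nonneg_nonneg)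
  qed
  also have "\<dots> = ennreal (c powr q) *
      (ennreal (l powr (1 - q)) * (\<integral>\<^sup>+ \<omega>. ennreal (\<bar>f \<omega>\<bar> powr q) \<partial>M) +
       ennreal ((1 - l) powr (1 - q)) * (\<integral>\<^sup>+ \<omega>. ennreal (\<bar>g \<omega>\<bar> powr q) \<partial>M))"
    by (simp add: nn_integral_cmult nn_integral_add)
  finally show ?thesis .
qed

lemma le_powr_add_if_convex_split_bounds:
  fixes z x y q :: real
  assumes q: "q > 0" and x: "x \<ge> 0" and y: "y \<ge> 0"
    and H: "\<And>l. 0 < l \<Longrightarrow> l < 1 \<Longrightarrow> z \<le> l powr (1 - q) * x powr q + (1 - l) powr (1 - q) * y powr q"
  shows "z \<le> (x + y) powr q"
proof -
  have lim: "z \<le> c" if "\<And>l. 0 < l \<Longrightarrow> l < 1 \<Longrightarrow> z \<le> (1 - l) powr (1 - q) * c" for c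
  proof (rule tendsto_lowerbound)
    have "((\<lambda>l. (1 - l) powr (1 - q) * c) \<longlongrightarrow> (1 - 0) powr (1 - q) * c) (at_right (0::real))"
      by (intro tendsto_intros) auto
    then show "((\<lambda>l. (1 - l) powr (1 - q) * c) \<longlongrightarrow> c) (at_right (0::real))"
      by simp
    show "\<forall>\<^sub>F l in at_right 0. z \<le> (1 - l) powr (1 - q) * c"
      unfolding eventually_at_right[of 0 "1::real", simplified] using that by (intro exI[of _ 1]) auto
  qed simp
  consider "x = 0" | "y = 0" | "x > 0" "y > 0"
    using x y by linarith
  then show ?thesis
  proof cases
    case 1
    show ?thesis
    proof (rule lim)
      fix l :: real assume "0 < l" "l < 1"
      then show "z \<le> (1 - l) powr (1 - q) * (x + y) powr q"
        using H[of l] 1 q by simp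
    qed
  next
    case 2
    show ?thesis
    proof (rule lim)
      fix l :: real assume "0 < l" "l < 1"
      then show "z \<le> (1 - l) powr (1 - q) * (x + y) powr q"
        using H[of "1 - l"] 2 q by simp
    qed
  next
    case 3
    \<comment> \<open>the bound is sharpest for \<open>l = x / (x + y)\<close>\<close>
    have weight: "(w / (x + y)) powr (1 - q) * w powr q = w * (x + y) powr (q - 1)" if "w > 0" for w
    proof -
      have "w powr (1 - q) * w powr q = w" "(x + y) powr (q - 1) * (x + y) powr (1 - q) = 1"
        using that 3 by (simp_all add: powr_add[symmetric])
      then show ?thesis
        using that 3 by (simp add: powr_divide field_simps)
    qed
    have "1 - x / (x + y) = y / (x + y)"
      using 3 by (simp add: field_simps)
    then have "z \<le> x * (x + y) powr (q - 1) + y * (x + y) powr (q - 1)"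
      using H[of "x / (x + y)"] 3 by (simp add: weight)
    also have "\<dots> = (x + y) powr q"
      using 3 by (simp add: powr_mult_base distrib_right[symmetric])
    finally show ?thesis .
  qed
qed

lemma enn_powr_ennreal: "x \<ge> 0 \<Longrightarrow> enn_powr (ennreal x) p = ennreal (x powr p)"
  by (simp add: enn_powr_def)

lemma enn_powr_zero [simp]: "enn_powr 0 p = 0"
  by (simp add: enn_powr_def)

lemma enn_powr_top [simp]: "enn_powr \<top> p = \<top>"
  by (simp add: enn_powr_def)

lemma enn_powr_root_le_mult:
  fixes Z A :: ennreal
  assumes q: "q > 0" and C: "C \<ge> 0" and Z: "Z \<le> ennreal (C powr q) * A"
  shows "enn_powr Z (1 / q) \<le> ennreal C * enn_powr A (1 / q)"
proof -
  consider "C = 0" | "C > 0" "A = \<top>" | a where "C > 0" "A = ennreal a" "a \<ge> 0"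
    using C by (cases A) force+
  then show ?thesis
  proof cases
    case 1
    then show ?thesis using Z q by (simp add: enn_powr_def)
  next
    case 2
    then show ?thesis by (simp add: ennreal_mult_top)
  next
    case (3 a)
    then obtain z where z: "Z = ennreal z" "z \<ge> 0" "z \<le> C powr q * a"
      using Z by (cases Z) (auto simp: ennreal_mult[symmetric] ennreal_le_iff top_unique)
    have "z powr (1 / q) \<le> (C powr q * a) powr (1 / q)"
      using z q by (intro powr_mono2) auto
    also have "\<dots> = C * a powr (1 / q)"
      using C 3 q by (simp add: powr_mult powr_powr)
    finally show ?thesis
      using z 3 C by (simp add: enn_powr_ennreal ennreal_mult[symmetric] ennreal_leI)
  qed
qed

lemma enn_powr_root_le_add:
  fixes Z A B :: ennreal
  assumes q: "q > 0" and K: "K \<ge> 0"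
    and H: "\<And>l. 0 < l \<Longrightarrow> l < 1 \<Longrightarrow>
      Z \<le> ennreal (K powr q) * (ennreal (l powr (1 - q)) * A + ennreal ((1 - l) powr (1 - q)) * B)"
  shows "enn_powr Z (1 / q) \<le> ennreal K * (enn_powr A (1 / q) + enn_powr B (1 / q))"
proof -
  consider "K = 0" | "K > 0" "A = \<top> \<or> B = \<top>"
    | a b where "K > 0" "A = ennreal a" "a \<ge> 0" "B = ennreal b" "b \<ge> 0"
    using K by (cases A; cases B) force+
  then show ?thesis
  proof cases
    case 1
    then show ?thesis using H[of "1/2"] q by (simp add: enn_powr_def)
  next
    case 2
    then show ?thesis by (auto simp: ennreal_mult_top)
  next
    case (3 a b)
    define x y where "x = K * a powr (1 / q)" and "y = K * b powr (1 / q)"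
    have xy: "x \<ge> 0" "y \<ge> 0" "x powr q = K powr q * a" "y powr q = K powr q * b"
      using q K 3 by (simp_all add: x_def y_def powr_mult powr_powr)
    have H': "Z \<le> ennreal (l powr (1 - q) * x powr q + (1 - l) powr (1 - q) * y powr q)" if "0 < l" "l < 1" for l
    proof -
      have "ennreal (l powr (1 - q) * x powr q + (1 - l) powr (1 - q) * y powr q) =
          ennreal (K powr q) * (ennreal (l powr (1 - q)) * A + ennreal ((1 - l) powr (1 - q)) * B)"
        unfolding xy 3 using 3
        by (simp add: ennreal_mult[symmetric] ennreal_plus[symmetric] algebra_simps del: ennreal_plus)
      then show ?thesis using H[OF that] by simp
    qed
    obtain z where z: "Z = ennreal z" "z \<ge> 0"
      using H'[of "1/2"] by (cases Z) (auto simp: top_unique)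
    have "z \<le> (x + y) powr q"
    proof (rule le_powr_add_if_convex_split_bounds[OF q xy(1,2)])
      fix l :: real assume l: "0 < l" "l < 1"
      have "0 \<le> l powr (1 - q) * x powr q + (1 - l) powr (1 - q) * y powr q"
        by simp
      then show "z \<le> l powr (1 - q) * x powr q + (1 - l) powr (1 - q) * y powr q"
        using H'[OF l] z by (simp add: ennreal_le_iff del: ennreal_plus)
    qed
    then have "z powr (1 / q) \<le> ((x + y) powr q) powr (1 / q)"
      using q z by (intro powr_mono2) auto
    also have "\<dots> = K * (a powr (1 / q) + b powr (1 / q))"
      using q xy by (simp add: powr_powr x_def y_def algebra_simps)
    finally show ?thesis
      using z 3 K by (simp add: enn_powr_ennreal ennreal_mult[symmetric] ennreal_plus[symmetric] ennreal_leI
          del: ennreal_plus)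
  qed
qed

context
  fixes P :: "'w measure" and u u' :: "'w \<Rightarrow> real" and MF MG :: "real measure"
    and g :: "real \<Rightarrow> real" and q K :: real
  assumes P: "prob_space P" and q: "q \<ge> 1"
    and u [measurable]: "u \<in> borel_measurable P" and u_unif: "distr P borel u = uniform_measure lborel {0..1}"
    and u' [measurable]: "u' \<in> borel_measurable P" and u'_unif: "distr P borel u' = uniform_measure lborel {0..1}"
    and MF: "real_distribution MF" and MG: "real_distribution MG"
    and g: "\<And>x. 0 \<le> g x" "\<And>x. g x \<le> K"
    and MG_density: "\<And>x. cdf MG x = (\<integral>y\<in>{..x}. g y \<partial>lborel)"
begin

lemma lipschitz_cdf_density: "K-lipschitz_on UNIV (cdf MG)"
  using g MG_density real_distribution.set_integrable_cdf_density[OF MG MG_density]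
  by (intro lipschitz_on_integral_of_bounded_density)

lemma continuous_on_cdf_density: "continuous_on UNIV (cdf MG)"
  using lipschitz_cdf_density by (rule lipschitz_on_continuous_on)

lemma cdf_gen_inv_cdf_density: "0 < v \<Longrightarrow> v < 1 \<Longrightarrow> cdf MG (gen_inv (cdf MG) v) = v"
  using real_distribution.cdf_gen_inv_cdf[OF MG continuous_on_cdf_density] .

lemma abs_cdf_density_diff_le: "\<bar>cdf MG x - cdf MG y\<bar> \<le> K * \<bar>x - y\<bar>"
  using lipschitz_onD[OF lipschitz_cdf_density] by (simp add: dist_real_def)

lemmas [measurable] =
  real_distribution.borel_measurable_gen_inv_cdf[OF MF]
  real_distribution.borel_measurable_gen_inv_cdf[OF MG]
  borel_measurable_continuous_onI[OF continuous_on_cdf_density]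

lemma nn_integral_uniform_diff_le_convex_split:
  assumes l: "0 < l" "l < 1"
  shows "(\<integral>\<^sup>+ \<omega>. ennreal (\<bar>u \<omega> - u' \<omega>\<bar> powr q) \<partial>P) \<le>
      ennreal (K powr q) * (ennreal (l powr (1 - q)) *
        (\<integral>\<^sup>+ \<omega>. ennreal (\<bar>gen_inv (cdf MF) (u \<omega>) - gen_inv (cdf MG) (u' \<omega>)\<bar> powr q) \<partial>P)
       + ennreal ((1 - l) powr (1 - q)) * Wq_pow q (cdf MF) (cdf MG))"
proof -
  let ?F = "gen_inv (cdf MF)" and ?G = "gen_inv (cdf MG)"
  have "Wq_pow q (cdf MF) (cdf MG) = (\<integral>\<^sup>+ \<omega>. ennreal (\<bar>?F (u \<omega>) - ?G (u \<omega>)\<bar> powr q) \<partial>P)"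
    unfolding Wq_pow_def by (rule nn_integral_uniform_unit[OF u _ u_unif, symmetric]) measurable
  moreover have "AE \<omega> in P. \<bar>u \<omega> - u' \<omega>\<bar> \<le> K * \<bar>?F (u \<omega>) - ?G (u' \<omega>)\<bar> + K * \<bar>?F (u \<omega>) - ?G (u \<omega>)\<bar>"
    using AE_uniform_unit_Ioo[OF u u_unif] AE_uniform_unit_Ioo[OF u' u'_unif]
  proof eventually_elim
    case (elim \<omega>)
    \<comment> \<open>insert \<open>cdf MG (?F (u \<omega>))\<close> between \<open>u \<omega> = cdf MG (?G (u \<omega>))\<close> and
      \<open>u' \<omega> = cdf MG (?G (u' \<omega>))\<close>\<close>
    have "u \<omega> = cdf MG (?G (u \<omega>))" "u' \<omega> = cdf MG (?G (u' \<omega>))"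
      using elim cdf_gen_inv_cdf_density by simp_all
    then have "\<bar>u \<omega> - u' \<omega>\<bar> \<le>
        \<bar>cdf MG (?F (u \<omega>)) - cdf MG (?G (u' \<omega>))\<bar> + \<bar>cdf MG (?F (u \<omega>)) - cdf MG (?G (u \<omega>))\<bar>"
      by linarith
    also have "\<dots> \<le> K * \<bar>?F (u \<omega>) - ?G (u' \<omega>)\<bar> + K * \<bar>?F (u \<omega>) - ?G (u \<omega>)\<bar>"
      by (intro add_mono abs_cdf_density_diff_le)
    finally show ?case .
  qed
  moreover note nn_integral_powr_le_convex_split[OF q lipschitz_on_nonneg[OF lipschitz_cdf_density] l,
      of "\<lambda>\<omega>. ?F (u \<omega>) - ?G (u' \<omega>)" P "\<lambda>\<omega>. ?F (u \<omega>) - ?G (u \<omega>)" "\<lambda>\<omega>. u \<omega> - u' \<omega>"]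
  ultimately show ?thesis
    by simp
qed

lemma nn_integral_uniform_comonotone_le:
  "(\<integral>\<^sup>+ \<omega>. ennreal (\<bar>u \<omega> - cdf MG (gen_inv (cdf MF) (u \<omega>))\<bar> powr q) \<partial>P) \<le>
    (\<integral>\<^sup>+ \<omega>. ennreal (\<bar>u' \<omega> - cdf MG (gen_inv (cdf MF) (u \<omega>))\<bar> powr q) \<partial>P)"
proof (rule comonotone_nn_integral_abs_powr_le)
  show "comonotone_on {\<omega>. 0 < u \<omega> \<and> u \<omega> < 1} u (\<lambda>\<omega>. cdf MG (gen_inv (cdf MF) (u \<omega>)))"
    by (rule comonotone_on_mono_on_comp[where I="{0<..<1}"])
      (auto simp: mono_on_def
        intro!: finite_borel_measure.cdf_nondecreasing[OF real_distribution.finite_borel_measure_M[OF MG]]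
          real_distribution.gen_inv_cdf_mono[OF MF])
qed (use q u_unif u'_unif AE_uniform_unit_Ioo[OF u u_unif] prob_space.finite_measure[OF P] in auto)

lemma nn_integral_cdf_quantile_diff_le:
  "(\<integral>\<^sup>+ \<omega>. ennreal (\<bar>u' \<omega> - cdf MG (gen_inv (cdf MF) (u \<omega>))\<bar> powr q) \<partial>P) \<le>
    ennreal (K powr q) * (\<integral>\<^sup>+ \<omega>. ennreal (\<bar>gen_inv (cdf MF) (u \<omega>) - gen_inv (cdf MG) (u' \<omega>)\<bar> powr q) \<partial>P)"
proof -
  let ?F = "gen_inv (cdf MF)" and ?G = "gen_inv (cdf MG)"
  have "(\<integral>\<^sup>+ \<omega>. ennreal (\<bar>u' \<omega> - cdf MG (?F (u \<omega>))\<bar> powr q) \<partial>P) \<le>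
      (\<integral>\<^sup>+ \<omega>. ennreal (K powr q) * ennreal (\<bar>?F (u \<omega>) - ?G (u' \<omega>)\<bar> powr q) \<partial>P)"
    using AE_uniform_unit_Ioo[OF u' u'_unif]
  proof (intro nn_integral_mono_AE, eventually_elim)
    case (elim \<omega>)
    then have "\<bar>u' \<omega> - cdf MG (?F (u \<omega>))\<bar> \<le> K * \<bar>?F (u \<omega>) - ?G (u' \<omega>)\<bar>"
      using abs_cdf_density_diff_le[of "?G (u' \<omega>)" "?F (u \<omega>)"] cdf_gen_inv_cdf_density
      by (simp add: abs_minus_commute)
    then have "\<bar>u' \<omega> - cdf MG (?F (u \<omega>))\<bar> powr q \<le> K powr q * \<bar>?F (u \<omega>) - ?G (u' \<omega>)\<bar> powr q"
      using lipschitz_on_nonneg[OF lipschitz_cdf_density] q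
      by (auto simp: powr_mult[symmetric] intro: powr_mono2)
    then show ?case
      by (simp add: ennreal_mult[symmetric] ennreal_leI)
  qed
  then show ?thesis
    by (simp add: nn_integral_cmult)
qed

lemma nn_integral_uniform_diff_le_double:
  "(\<integral>\<^sup>+ \<omega>. ennreal (\<bar>u \<omega> - u' \<omega>\<bar> powr q) \<partial>P) \<le>
    ennreal ((2 * K) powr q) * (\<integral>\<^sup>+ \<omega>. ennreal (\<bar>gen_inv (cdf MF) (u \<omega>) - gen_inv (cdf MG) (u' \<omega>)\<bar> powr q) \<partial>P)"
proof -
  let ?V = "\<lambda>\<omega>. cdf MG (gen_inv (cdf MF) (u \<omega>))"
  define I where "I = (\<integral>\<^sup>+ \<omega>. ennreal (\<bar>gen_inv (cdf MF) (u \<omega>) - gen_inv (cdf MG) (u' \<omega>)\<bar> powr q) \<partial>P)"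
  define J where "J = (\<integral>\<^sup>+ \<omega>. ennreal (\<bar>u' \<omega> - ?V \<omega>\<bar> powr q) \<partial>P)"
  have half: "(1 / 2 :: real) powr (1 - q) = 2 powr (q - 1)"
    by (simp add: powr_divide powr_minus_divide[symmetric] powr_minus)
  have "(\<integral>\<^sup>+ \<omega>. ennreal (\<bar>u \<omega> - u' \<omega>\<bar> powr q) \<partial>P) \<le> ennreal (1 powr q) *
      (ennreal ((1 / 2) powr (1 - q)) * (\<integral>\<^sup>+ \<omega>. ennreal (\<bar>u \<omega> - ?V \<omega>\<bar> powr q) \<partial>P) +
       ennreal ((1 - 1 / 2) powr (1 - q)) * J)"
    unfolding J_def by (rule nn_integral_powr_le_convex_split[OF q]) auto
  also have "\<dots> \<le> ennreal (2 powr (q - 1)) * (J + J)"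
    using nn_integral_uniform_comonotone_le unfolding J_def
    by (simp add: half distrib_left add_right_mono mult_left_mono)
  also have "\<dots> = ennreal (2 powr q) * J"
  proof -
    have "ennreal (2 powr q) = ennreal (2 * 2 powr (q - 1))"
      using powr_mult_base[of 2 "q - 1"] by simp
    also have "\<dots> = ennreal 2 * ennreal (2 powr (q - 1))"
      by (rule ennreal_mult) auto
    finally show ?thesis
      by (simp add: mult_2[symmetric] mult_ac)
  qed
  also have "\<dots> \<le> ennreal (2 powr q) * (ennreal (K powr q) * I)"
    using nn_integral_cdf_quantile_diff_le unfolding I_def J_def by (rule mult_left_mono) simp
  also have "\<dots> = ennreal ((2 * K) powr q) * I"
    using lipschitz_on_nonneg[OF lipschitz_cdf_density] by (simp add: powr_mult ennreal_mult mult.assoc)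
  finally show ?thesis
    unfolding I_def .
qed

end

lemma Lq_norm_pair_measure:
  assumes "sigma_finite_measure P" and [measurable]: "(\<lambda>(t, \<omega>). f t \<omega>) \<in> borel_measurable (\<mu> \<Otimes>\<^sub>M P)"
  shows "Lq_norm (\<mu> \<Otimes>\<^sub>M P) q (\<lambda>(t, \<omega>). f t \<omega>) =
    enn_powr (\<integral>\<^sup>+ t. (\<integral>\<^sup>+ \<omega>. ennreal (\<bar>f t \<omega>\<bar> powr q) \<partial>P) \<partial>\<mu>) (1 / q)"
proof -
  have "(\<lambda>z. ennreal (\<bar>case z of (t, \<omega>) \<Rightarrow> f t \<omega>\<bar> powr q)) \<in> borel_measurable (\<mu> \<Otimes>\<^sub>M P)"
    by measurable
  then show ?thesis
    unfolding Lq_norm_def by (simp add: sigma_finite_measure.nn_integral_fst[OF assms(1), symmetric])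
qed

lemma enn_powr_nn_integral_le_add:
  assumes q: "q > 0" and K: "K \<ge> 0"
    and [measurable]: "N \<in> borel_measurable M" "W \<in> borel_measurable M"
    and U: "\<And>t l. t \<in> space M \<Longrightarrow> 0 < l \<Longrightarrow> l < 1 \<Longrightarrow>
      U t \<le> ennreal (K powr q) * (ennreal (l powr (1 - q)) * N t + ennreal ((1 - l) powr (1 - q)) * W t)"
  shows "enn_powr (\<integral>\<^sup>+ t. U t \<partial>M) (1 / q) \<le>
    ennreal K * (enn_powr (\<integral>\<^sup>+ t. N t \<partial>M) (1 / q) + enn_powr (\<integral>\<^sup>+ t. W t \<partial>M) (1 / q))"
proof (rule enn_powr_root_le_add[OF q K])
  fix l :: real assume l: "0 < l" "l < 1"
  have "(\<integral>\<^sup>+ t. U t \<partial>M) \<le>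
      (\<integral>\<^sup>+ t. ennreal (K powr q) * (ennreal (l powr (1 - q)) * N t + ennreal ((1 - l) powr (1 - q)) * W t) \<partial>M)"
    using U l by (intro nn_integral_mono) auto
  also have "\<dots> = ennreal (K powr q) * (ennreal (l powr (1 - q)) * (\<integral>\<^sup>+ t. N t \<partial>M) +
      ennreal ((1 - l) powr (1 - q)) * (\<integral>\<^sup>+ t. W t \<partial>M))"
    by (simp add: nn_integral_cmult nn_integral_add)
  finally show "(\<integral>\<^sup>+ t. U t \<partial>M) \<le> ennreal (K powr q) * (ennreal (l powr (1 - q)) * (\<integral>\<^sup>+ t. N t \<partial>M) +
      ennreal ((1 - l) powr (1 - q)) * (\<integral>\<^sup>+ t. W t \<partial>M))" .
qed

lemma enn_powr_nn_integral_le_mult: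
  assumes q: "q > 0" and C: "C \<ge> 0" and [measurable]: "N \<in> borel_measurable M"
    and U: "\<And>t. t \<in> space M \<Longrightarrow> U t \<le> ennreal (C powr q) * N t"
  shows "enn_powr (\<integral>\<^sup>+ t. U t \<partial>M) (1 / q) \<le> ennreal C * enn_powr (\<integral>\<^sup>+ t. N t \<partial>M) (1 / q)"
proof (rule enn_powr_root_le_mult[OF q C])
  have "(\<integral>\<^sup>+ t. U t \<partial>M) \<le> (\<integral>\<^sup>+ t. ennreal (C powr q) * N t \<partial>M)"
    using U by (intro nn_integral_mono) auto
  then show "(\<integral>\<^sup>+ t. U t \<partial>M) \<le> ennreal (C powr q) * (\<integral>\<^sup>+ t. N t \<partial>M)"
    by (simp add: nn_integral_cmult)
qed

lemma abs_le_SUP_abs: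
  fixes f :: "'a \<Rightarrow> 'b \<Rightarrow> real"
  assumes "\<exists>C. \<forall>t\<in>S. \<forall>x. \<bar>f t x\<bar> \<le> C" "t \<in> S"
  shows "\<bar>f t x\<bar> \<le> (SUP p \<in> S \<times> UNIV. \<bar>f (fst p) (snd p)\<bar>)"
proof -
  obtain C where "\<forall>t\<in>S. \<forall>x. \<bar>f t x\<bar> \<le> C"
    using assms(1) by blast
  then have "bdd_above ((\<lambda>p. \<bar>f (fst p) (snd p)\<bar>) ` (S \<times> UNIV))"
    by (auto intro!: bdd_aboveI2)
  moreover have "(t, x) \<in> S \<times> UNIV"
    using assms(2) by simp
  ultimately show ?thesis
    by (metis (no_types, lifting) cSUP_upper fst_conv snd_conv)
qed

lemma copula_process_coordinate_bounds:
  fixes P :: "'w measure" and UX UY :: "'t \<Rightarrow> 'w \<Rightarrow> real" and F G g :: "real \<Rightarrow> real"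
  assumes P: "prob_space P" and q: "q \<ge> 1"
    and "copula_process P T UX" "copula_process P T UY" "t \<in> T"
    and F: "distfun_moment q F" and G: "distfun_moment q G"
    and g: "\<forall>x. 0 \<le> g x" "\<forall>x. G x = (\<integral>y\<in>{..x}. g y \<partial>lborel)" "\<forall>x. \<bar>g x\<bar> \<le> K"
  shows "(\<forall>l. 0 < l \<and> l < 1 \<longrightarrow> (\<integral>\<^sup>+ \<omega>. ennreal (\<bar>UX t \<omega> - UY t \<omega>\<bar> powr q) \<partial>P) \<le>
      ennreal (K powr q) * (ennreal (l powr (1 - q)) *
        (\<integral>\<^sup>+ \<omega>. ennreal (\<bar>gen_inv F (UX t \<omega>) - gen_inv G (UY t \<omega>)\<bar> powr q) \<partial>P)
        + ennreal ((1 - l) powr (1 - q)) * Wq_pow q F G)) \<and>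
    (\<integral>\<^sup>+ \<omega>. ennreal (\<bar>UX t \<omega> - UY t \<omega>\<bar> powr q) \<partial>P) \<le>
      ennreal ((2 * K) powr q) * (\<integral>\<^sup>+ \<omega>. ennreal (\<bar>gen_inv F (UX t \<omega>) - gen_inv G (UY t \<omega>)\<bar> powr q) \<partial>P)"
proof -
  have U: "UX t \<in> borel_measurable P" "distr P borel (UX t) = uniform_measure lborel {0..1}"
    "UY t \<in> borel_measurable P" "distr P borel (UY t) = uniform_measure lborel {0..1}"
    using assms(3-5) unfolding copula_process_def by auto
  obtain MF MG where MF: "real_distribution MF" "F = cdf MF" and MG: "real_distribution MG" "G = cdf MG"
    using F G unfolding distfun_moment_def by blast
  have g': "\<And>x. 0 \<le> g x" "\<And>x. g x \<le> K" "\<And>x. cdf MG x = (\<integral>y\<in>{..x}. g y \<partial>lborel)"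
    using g MG(2) by (auto simp: abs_le_iff)
  show ?thesis
    using nn_integral_uniform_diff_le_convex_split[OF P q U MF(1) MG(1) g']
      nn_integral_uniform_diff_le_double[OF P q U MF(1) MG(1) g']
    unfolding MF(2) MG(2) by blast
qed

theorem theorem4p14:
  fixes a b :: "'a::euclidean_space"
    and \<mu> :: "'a measure" and P :: "'w measure" and q :: real
    and UX UY :: "'a \<Rightarrow> 'w \<Rightarrow> real"
    and FX FY fY :: "'a \<Rightarrow> real \<Rightarrow> real"
  defines "T \<equiv> cbox a b"
    and "Xt \<equiv> (\<lambda>t \<omega>. gen_inv (FX t) (UX t \<omega>))"
    and "Yt \<equiv> (\<lambda>t \<omega>. gen_inv (FY t) (UY t \<omega>))"
    and "K \<equiv> (SUP p \<in> cbox a b \<times> UNIV. \<bar>fY (fst p) (snd p)\<bar>)"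
  assumes mu_sets: "sets \<mu> = sets (restrict_space borel T)"
    and mu_fin: "finite_measure \<mu>"
    and P: "prob_space P"
    and q: "q \<ge> 1"
    and copX: "copula_process P T UX" and copY: "copula_process P T UY"
    and FX: "\<forall>t\<in>T. distfun_moment q (FX t)"
    and FY: "\<forall>t\<in>T. distfun_moment q (FY t)"
    and dens: "\<forall>t\<in>T. fY t \<in> borel_measurable borel \<and> (\<forall>x. 0 \<le> fY t x) \<and>
                 (\<forall>x. FY t x = (\<integral>y\<in>{..x}. fY t y \<partial>lborel))"
    and smono: "\<forall>t\<in>T. strict_mono (FY t)"
    and bdd: "\<exists>C. \<forall>t\<in>T. \<forall>x. \<bar>fY t x\<bar> \<le> C"
    and measU: "(\<lambda>(t, \<omega>). UX t \<omega>) \<in> borel_measurable (\<mu> \<Otimes>\<^sub>M P)"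
               "(\<lambda>(t, \<omega>). UY t \<omega>) \<in> borel_measurable (\<mu> \<Otimes>\<^sub>M P)"
    and measXY: "(\<lambda>(t, \<omega>). Xt t \<omega>) \<in> borel_measurable (\<mu> \<Otimes>\<^sub>M P)"
               "(\<lambda>(t, \<omega>). Yt t \<omega>) \<in> borel_measurable (\<mu> \<Otimes>\<^sub>M P)"
    and measW: "(\<lambda>t. Wq_pow q (FX t) (FY t)) \<in> borel_measurable \<mu>"
  shows "Lq_norm (\<mu> \<Otimes>\<^sub>M P) q (\<lambda>(t, \<omega>). UX t \<omega> - UY t \<omega>)
           \<le> ennreal K * (Lq_norm (\<mu> \<Otimes>\<^sub>M P) q (\<lambda>(t, \<omega>). Xt t \<omega> - Yt t \<omega>)
                + enn_powr (\<integral>\<^sup>+ t. Wq_pow q (FX t) (FY t) \<partial>\<mu>) (1 / q))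
       \<and> Lq_norm (\<mu> \<Otimes>\<^sub>M P) q (\<lambda>(t, \<omega>). UX t \<omega> - UY t \<omega>)
           \<le> 2 * ennreal K * Lq_norm (\<mu> \<Otimes>\<^sub>M P) q (\<lambda>(t, \<omega>). Xt t \<omega> - Yt t \<omega>)"
proof -
  interpret P: prob_space P by (rule P)
  note [measurable] = measU measXY measW
  define NU where "NU t = (\<integral>\<^sup>+ \<omega>. ennreal (\<bar>UX t \<omega> - UY t \<omega>\<bar> powr q) \<partial>P)" for t
  define NXY where "NXY t = (\<integral>\<^sup>+ \<omega>. ennreal (\<bar>Xt t \<omega> - Yt t \<omega>\<bar> powr q) \<partial>P)" for t
  have space_\<mu>: "space \<mu> = T"
    using sets_eq_imp_space_eq[OF mu_sets] by (simp add: space_restrict_space)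
  have fY_le: "\<bar>fY t x\<bar> \<le> K" if "t \<in> T" for t x
    using abs_le_SUP_abs[OF bdd that] unfolding K_def T_def .
  have bounds: "(\<forall>l. 0 < l \<and> l < 1 \<longrightarrow> NU t \<le> ennreal (K powr q) *
      (ennreal (l powr (1 - q)) * NXY t + ennreal ((1 - l) powr (1 - q)) * Wq_pow q (FX t) (FY t))) \<and>
    NU t \<le> ennreal ((2 * K) powr q) * NXY t" if t: "t \<in> T" for t
    unfolding NU_def NXY_def Xt_def Yt_def
    by (rule copula_process_coordinate_bounds[OF P q copX copY t FX[rule_format, OF t] FY[rule_format, OF t],
          where g = "fY t"])
      (use dens fY_le[OF t] t in auto)
  have [measurable]: "NXY \<in> borel_measurable \<mu>"
    unfolding NXY_def by (rule P.borel_measurable_nn_integral) measurable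
  have Lq_U: "Lq_norm (\<mu> \<Otimes>\<^sub>M P) q (\<lambda>(t, \<omega>). UX t \<omega> - UY t \<omega>) = enn_powr (\<integral>\<^sup>+ t. NU t \<partial>\<mu>) (1 / q)"
    unfolding NU_def by (rule Lq_norm_pair_measure[OF P.sigma_finite_measure_axioms]) measurable
  have Lq_XY: "Lq_norm (\<mu> \<Otimes>\<^sub>M P) q (\<lambda>(t, \<omega>). Xt t \<omega> - Yt t \<omega>) = enn_powr (\<integral>\<^sup>+ t. NXY t \<partial>\<mu>) (1 / q)"
    unfolding NXY_def by (rule Lq_norm_pair_measure[OF P.sigma_finite_measure_axioms]) measurable
  show ?thesis
  proof (cases "T = {}")
    case True
    then show ?thesis
      using space_\<mu> by (simp add: Lq_U nn_integral_empty)
  next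
    case False
    then have "K \<ge> 0"
      using fY_le by (meson abs_ge_zero all_not_in_conv order_trans)
    have "enn_powr (\<integral>\<^sup>+ t. NU t \<partial>\<mu>) (1 / q) \<le> ennreal K * (enn_powr (\<integral>\<^sup>+ t. NXY t \<partial>\<mu>) (1 / q)
        + enn_powr (\<integral>\<^sup>+ t. Wq_pow q (FX t) (FY t) \<partial>\<mu>) (1 / q))"
      using q \<open>K \<ge> 0\<close> bounds space_\<mu> by (intro enn_powr_nn_integral_le_add measW) auto
    moreover have "enn_powr (\<integral>\<^sup>+ t. NU t \<partial>\<mu>) (1 / q) \<le> ennreal (2 * K) * enn_powr (\<integral>\<^sup>+ t. NXY t \<partial>\<mu>) (1 / q)"
      using q \<open>K \<ge> 0\<close> bounds space_\<mu> by (intro enn_powr_nn_integral_le_mult) auto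
    ultimately show ?thesis
      using \<open>K \<ge> 0\<close> unfolding Lq_U Lq_XY by (simp add: ennreal_mult)
  qed
qed

end
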